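(* There is no connected, non-complete, $5$-regular and $1$ net-regular SRSG in $\mathcal C_1\cup\mathcal C_4\cup\mathcal C_5$ with parameters $(n,5,a,b,c)$ such that $(a,b)\in\{(2,-2),(1,1),(1,-2),(0,0),(0,-1),(-1,0),(-1,-1),(-2,2)\}$.
   Context: A signed graph $\dot G=(G,\sigma)$ is a simple graph $G$ with $\sigma:E(G)\to\{\pm1\}$; adjacency matrix $A_{\dot G}$ has entries $\sigma(v_iv_j)$ for adjacent vertices and $0$ otherwise. Degree and connectedness refer to $G$; net-degree is $d^+(v)-d^-(v)$; $\rho$ net-regular means all net-degrees equal $\rho$. $\dot G$ on $n$ vertices is an SRSG if it is neither homogeneous complete nor edgeless and there are $r\in\mathbb N$, $a,b,c\in\mathbb Z$ with $(A^2_{\dot G})_{ii}=r$, $(A^2_{\dot G})_{ij}=a$ for positive edges, $b$ for negative edges, $c$ for distinct non-adjacent pairs; parameters $(n,r,a,b,c)$. Classes: $\mathcal C_1$: $a=-b$ and (complete, or non-complete with $c\neq0$); $\mathcal C_4$: $a\ne-b$, non-complete, $c=0$; $\mathcal C_5$: $a\neq-b$, non-complete, $c\notin\{0,\frac{a+b}{2}\}$. *)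

theory Defs
  imports Complex_Main
begin

text \<open>A i j = sigma(v_i v_j) if v_i v_j is an edge and 0 otherwise.\<close>

definition signed_graph :: "nat \<Rightarrow> (nat \<Rightarrow> nat \<Rightarrow> int) \<Rightarrow> bool" where
  "signed_graph n A \<longleftrightarrow>
     (\<forall>i<n. \<forall>j<n. A i j \<in> {-1, 0, 1} \<and> A i j = A j i) \<and> (\<forall>i<n. A i i = 0)"

definition adj :: "nat \<Rightarrow> (nat \<Rightarrow> nat \<Rightarrow> int) \<Rightarrow> nat \<Rightarrow> nat \<Rightarrow> bool" where
  "adj n A i j \<longleftrightarrow> i < n \<and> j < n \<and> A i j \<noteq> 0"

definition sq_entry :: "nat \<Rightarrow> (nat \<Rightarrow> nat \<Rightarrow> int) \<Rightarrow> nat \<Rightarrow> nat \<Rightarrow> int" where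
  "sq_entry n A i j = (\<Sum>k<n. A i k * A k j)"

definition degree :: "nat \<Rightarrow> (nat \<Rightarrow> nat \<Rightarrow> int) \<Rightarrow> nat \<Rightarrow> nat" where
  "degree n A i = card {j. j < n \<and> A i j \<noteq> 0}"

definition net_degree :: "nat \<Rightarrow> (nat \<Rightarrow> nat \<Rightarrow> int) \<Rightarrow> nat \<Rightarrow> int" where
  "net_degree n A i = int (card {j. j < n \<and> A i j = 1}) - int (card {j. j < n \<and> A i j = -1})"

definition regular :: "nat \<Rightarrow> (nat \<Rightarrow> nat \<Rightarrow> int) \<Rightarrow> nat \<Rightarrow> bool" where
  "regular n A r \<longleftrightarrow> (\<forall>i<n. degree n A i = r)"

definition net_regular :: "nat \<Rightarrow> (nat \<Rightarrow> nat \<Rightarrow> int) \<Rightarrow> int \<Rightarrow> bool" where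
  "net_regular n A \<rho> \<longleftrightarrow> (\<forall>i<n. net_degree n A i = \<rho>)"

definition connected_sg :: "nat \<Rightarrow> (nat \<Rightarrow> nat \<Rightarrow> int) \<Rightarrow> bool" where
  "connected_sg n A \<longleftrightarrow> (\<forall>i<n. \<forall>j<n. (adj n A)\<^sup>*\<^sup>* i j)"

definition complete_sg :: "nat \<Rightarrow> (nat \<Rightarrow> nat \<Rightarrow> int) \<Rightarrow> bool" where
  "complete_sg n A \<longleftrightarrow> (\<forall>i<n. \<forall>j<n. i \<noteq> j \<longrightarrow> A i j \<noteq> 0)"

definition homogeneous_complete :: "nat \<Rightarrow> (nat \<Rightarrow> nat \<Rightarrow> int) \<Rightarrow> bool" where
  "homogeneous_complete n A \<longleftrightarrow>
     (\<exists>s\<in>{-1, 1::int}. \<forall>i<n. \<forall>j<n. i \<noteq> j \<longrightarrow> A i j = s)"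

definition edgeless :: "nat \<Rightarrow> (nat \<Rightarrow> nat \<Rightarrow> int) \<Rightarrow> bool" where
  "edgeless n A \<longleftrightarrow> (\<forall>i<n. \<forall>j<n. A i j = 0)"

definition SRSG :: "nat \<Rightarrow> (nat \<Rightarrow> nat \<Rightarrow> int) \<Rightarrow> nat \<Rightarrow> int \<Rightarrow> int \<Rightarrow> int \<Rightarrow> bool" where
  "SRSG n A r a b c \<longleftrightarrow>
     signed_graph n A \<and> \<not> homogeneous_complete n A \<and> \<not> edgeless n A \<and>
     (\<forall>i<n. sq_entry n A i i = int r) \<and>
     (\<forall>i<n. \<forall>j<n. i \<noteq> j \<longrightarrow> A i j = 1 \<longrightarrow> sq_entry n A i j = a) \<and>
     (\<forall>i<n. \<forall>j<n. i \<noteq> j \<longrightarrow> A i j = -1 \<longrightarrow> sq_entry n A i j = b) \<and>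
     (\<forall>i<n. \<forall>j<n. i \<noteq> j \<longrightarrow> A i j = 0 \<longrightarrow> sq_entry n A i j = c)"

definition class_C1 :: "nat \<Rightarrow> (nat \<Rightarrow> nat \<Rightarrow> int) \<Rightarrow> int \<Rightarrow> int \<Rightarrow> int \<Rightarrow> bool" where
  "class_C1 n A a b c \<longleftrightarrow> a = - b \<and> (complete_sg n A \<or> (\<not> complete_sg n A \<and> c \<noteq> 0))"

definition class_C4 :: "nat \<Rightarrow> (nat \<Rightarrow> nat \<Rightarrow> int) \<Rightarrow> int \<Rightarrow> int \<Rightarrow> int \<Rightarrow> bool" where
  "class_C4 n A a b c \<longleftrightarrow> a \<noteq> - b \<and> \<not> complete_sg n A \<and> c = 0"

definition class_C5 :: "nat \<Rightarrow> (nat \<Rightarrow> nat \<Rightarrow> int) \<Rightarrow> int \<Rightarrow> int \<Rightarrow> int \<Rightarrow> bool" where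
  "class_C5 n A a b c \<longleftrightarrow> a \<noteq> - b \<and> \<not> complete_sg n A \<and>
     of_int c \<notin> {0, (of_int a + of_int b) / (2::rat)}"

end

theory Submission
  imports Defs
begin

(* Each vertex has three positive and two negative neighbours, so A has row sums 1. Summing the
   rows of A^2 gives 3a + 2b + zc = -4, where z = n - 6 is the number of non-neighbours of a
   vertex, and counting signed triangles through a vertex shows that a is even.  Since
   2 A^2 = 2c J + (10 - 2c) I + (a - b) A + (a + b - 2c) |A| and A commutes with J and A^2, the
   matrices A and |A| commute as soon as a + b <> 2c, which the classes C1, C4, C5 guarantee;
   then A^2 and |A|^2 agree modulo 4.  Together with |A^2| <= |A|^2 <= 5 - |A| entrywise and
   the lower bound 12 - n for the number of common neighbours of non-adjacent vertices, only
   (a, b, n, c) = (2, -2, 8, -3), (2, -2, 12, -1), (0, 0, 10, -1) survive.  The first violates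
   positive semidefiniteness of the Gram matrix of three pairwise non-adjacent vertices, the
   other two the count sum_j |A|^2_ij = 25. *)

lemma even_sum_symmetric_zero_diagonal:
  fixes f :: "nat \<Rightarrow> nat \<Rightarrow> int"
  assumes "\<And>j k. j < m \<Longrightarrow> k < m \<Longrightarrow> f j k = f k j" and "\<And>j. j < m \<Longrightarrow> f j j = 0"
  shows "even (\<Sum>j<m. \<Sum>k<m. f j k)"
  using assms
proof (induction m)
  case 0
  then show ?case by simp
next
  case (Suc m)
  have "(\<Sum>j<m. f j m) = (\<Sum>k<m. f m k)"
    using Suc.prems(1) by (intro sum.cong) auto
  then have "(\<Sum>j<Suc m. \<Sum>k<Suc m. f j k) = (\<Sum>j<m. \<Sum>k<m. f j k) + 2 * (\<Sum>k<m. f m k)"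
    using Suc.prems(2)[of m] by (simp add: sum.distrib)
  moreover have "even (\<Sum>j<m. \<Sum>k<m. f j k)"
    using Suc by auto
  ultimately show ?case by (metis dvd_add dvd_triv_left)
qed

lemma sum_indicator_lessThan:
  fixes n :: nat
  shows "(\<Sum>j<n. if P j then 1 else 0 :: int) = int (card {j. j < n \<and> P j})"
  by (simp add: sum.If_cases Int_def)

definition pos_neighbours :: "nat \<Rightarrow> (nat \<Rightarrow> nat \<Rightarrow> int) \<Rightarrow> nat \<Rightarrow> nat set" where
  "pos_neighbours n A i = {j. j < n \<and> A i j = 1}"

definition neg_neighbours :: "nat \<Rightarrow> (nat \<Rightarrow> nat \<Rightarrow> int) \<Rightarrow> nat \<Rightarrow> nat set" where
  "neg_neighbours n A i = {j. j < n \<and> A i j = -1}"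

definition non_neighbours :: "nat \<Rightarrow> (nat \<Rightarrow> nat \<Rightarrow> int) \<Rightarrow> nat \<Rightarrow> nat set" where
  "non_neighbours n A i = {j. j < n \<and> j \<noteq> i \<and> A i j = 0}"

definition common_neighbours :: "nat \<Rightarrow> (nat \<Rightarrow> nat \<Rightarrow> int) \<Rightarrow> nat \<Rightarrow> nat \<Rightarrow> int" where
  "common_neighbours n A i j = (\<Sum>k<n. \<bar>A i k\<bar> * \<bar>A k j\<bar>)"

locale sgraph =
  fixes n :: nat and A :: "nat \<Rightarrow> nat \<Rightarrow> int"
  assumes signed_graph: "signed_graph n A"
begin

lemma entry_cases: "i < n \<Longrightarrow> j < n \<Longrightarrow> A i j = -1 \<or> A i j = 0 \<or> A i j = 1"
  using signed_graph unfolding signed_graph_def by auto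

lemma sym: "i < n \<Longrightarrow> j < n \<Longrightarrow> A i j = A j i"
  using signed_graph unfolding signed_graph_def by auto

lemma diag_zero: "i < n \<Longrightarrow> A i i = 0"
  using signed_graph unfolding signed_graph_def by auto

lemma row_class_sum:
  fixes f :: "nat \<Rightarrow> int"
  assumes i: "i < n"
    and f: "\<And>j. j < n \<Longrightarrow>
      f j = (if j = i then x0 else if A i j = 1 then xp else if A i j = -1 then xm else xz)"
  shows "(\<Sum>j<n. f j) = x0 + int (card (pos_neighbours n A i)) * xp
    + int (card (neg_neighbours n A i)) * xm + int (card (non_neighbours n A i)) * xz"
proof -
  have "(\<Sum>j<n. f j) = (\<Sum>j<n. x0 * (if j = i then 1 else 0) + xp * (if A i j = 1 then 1 else 0)
     + xm * (if A i j = -1 then 1 else 0) + xz * (if j \<noteq> i \<and> A i j = 0 then 1 else 0))"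
    using f diag_zero[OF i] entry_cases[OF i] by (intro sum.cong) auto
  also have "\<dots> = x0 * (\<Sum>j<n. if j = i then 1 else 0) + xp * (\<Sum>j<n. if A i j = 1 then 1 else 0)
     + xm * (\<Sum>j<n. if A i j = -1 then 1 else 0)
     + xz * (\<Sum>j<n. if j \<noteq> i \<and> A i j = 0 then 1 else 0)"
    by (simp only: sum.distrib sum_distrib_left)
  moreover have "(\<Sum>j<n. if j = i then 1 else 0 :: int) = 1"
    using i by simp
  ultimately show ?thesis
    by (simp add: sum_indicator_lessThan pos_neighbours_def neg_neighbours_def
        non_neighbours_def algebra_simps)
qed

lemma degree_eq_card_pos_neg: "i < n \<Longrightarrow>
  int (degree n A i) = int (card (pos_neighbours n A i)) + int (card (neg_neighbours n A i))"
proof -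
  assume i: "i < n"
  have "(\<Sum>j<n. if A i j \<noteq> 0 then 1 else 0) = 0 + int (card (pos_neighbours n A i)) * 1
    + int (card (neg_neighbours n A i)) * 1 + int (card (non_neighbours n A i)) * 0"
    by (rule row_class_sum) (use i entry_cases diag_zero in auto)
  then show ?thesis
    by (simp add: degree_def sum_indicator_lessThan)
qed

lemma net_degree_eq_card_pos_neg: "net_degree n A i =
  int (card (pos_neighbours n A i)) - int (card (neg_neighbours n A i))"
  by (simp add: net_degree_def pos_neighbours_def neg_neighbours_def)

lemma card_vertices_eq: "i < n \<Longrightarrow>
  int n = 1 + int (degree n A i) + int (card (non_neighbours n A i))"
  using row_class_sum[of i "\<lambda>_. 1" 1 1 1 1] degree_eq_card_pos_neg by simp

lemma sum_abs_row: assumes i: "i < n"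
  shows "(\<Sum>k<n. \<bar>A i k\<bar>) = int (degree n A i)"
proof -
  have "(\<Sum>k<n. \<bar>A i k\<bar>) = 0 + int (card (pos_neighbours n A i)) * 1
    + int (card (neg_neighbours n A i)) * 1 + int (card (non_neighbours n A i)) * 0"
    by (rule row_class_sum) (use i entry_cases diag_zero in fastforce)+
  then show ?thesis
    using degree_eq_card_pos_neg[OF i] by simp
qed

lemma sum_row: assumes i: "i < n"
  shows "(\<Sum>k<n. A i k) = net_degree n A i"
proof -
  have "(\<Sum>k<n. A i k) = 0 + int (card (pos_neighbours n A i)) * 1
    + int (card (neg_neighbours n A i)) * (-1) + int (card (non_neighbours n A i)) * 0"
    by (rule row_class_sum) (use i entry_cases diag_zero in fastforce)+
  then show ?thesis
    by (simp add: net_degree_eq_card_pos_neg)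
qed

lemma sq_entry_eq_row_products: "j < n \<Longrightarrow> sq_entry n A i j = (\<Sum>k<n. A i k * A j k)"
  unfolding sq_entry_def using sym by (intro sum.cong) auto

lemma sq_entry_commute: "i < n \<Longrightarrow> j < n \<Longrightarrow> sq_entry n A i j = sq_entry n A j i"
  by (simp add: sq_entry_eq_row_products mult.commute)

lemma cube_entry_commute: assumes "i < n" "j < n"
  shows "(\<Sum>k<n. A i k * sq_entry n A k j) = (\<Sum>k<n. A j k * sq_entry n A k i)"
proof -
  have "(\<Sum>k<n. A i k * sq_entry n A k j) = (\<Sum>k<n. \<Sum>l<n. A i k * A k l * A l j)"
    unfolding sq_entry_def by (simp add: sum_distrib_left mult.assoc)
  also have "\<dots> = (\<Sum>l<n. \<Sum>k<n. A i k * A k l * A l j)"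
    by (rule sum.swap)
  also have "\<dots> = (\<Sum>l<n. \<Sum>k<n. A j l * A l k * A k i)"
    using assms sym by (intro sum.cong) (auto simp: mult_ac)
  also have "\<dots> = (\<Sum>k<n. A j k * sq_entry n A k i)"
    unfolding sq_entry_def by (simp add: sum_distrib_left mult.assoc)
  finally show ?thesis .
qed

lemma even_sum_row_times_sq_entry: assumes "i < n"
  shows "even (\<Sum>j<n. A i j * sq_entry n A i j)"
proof -
  have "(\<Sum>j<n. A i j * sq_entry n A i j) = (\<Sum>j<n. \<Sum>k<n. A i j * A i k * A k j)"
    unfolding sq_entry_def by (simp add: sum_distrib_left mult.assoc)
  moreover have "even (\<Sum>j<n. \<Sum>k<n. A i j * A i k * A k j)"
    using assms sym diag_zero by (intro even_sum_symmetric_zero_diagonal) (auto simp: mult_ac)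
  ultimately show ?thesis by simp
qed

lemma gram_nonneg: assumes "i < n" "j < n" "l < n"
  shows "0 \<le> sq_entry n A i i + sq_entry n A j j + sq_entry n A l l
    + 2 * sq_entry n A i j + 2 * sq_entry n A i l + 2 * sq_entry n A j l"
proof -
  have "0 \<le> (\<Sum>k<n. (A i k + A j k + A l k)\<^sup>2)"
    by (intro sum_nonneg) simp
  also have "\<dots> = sq_entry n A i i + sq_entry n A j j + sq_entry n A l l
    + 2 * sq_entry n A i j + 2 * sq_entry n A i l + 2 * sq_entry n A j l"
    using assms by (simp add: sq_entry_eq_row_products sum.distrib sum_distrib_left power2_eq_square
        algebra_simps)
  finally show ?thesis .
qed

lemma common_neighbours_commute: "i < n \<Longrightarrow> j < n \<Longrightarrow> common_neighbours n A i j = common_neighbours n A j i"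
  unfolding common_neighbours_def using sym by (intro sum.cong) (auto simp: mult.commute)

lemma common_neighbours_diag: assumes "i < n"
  shows "common_neighbours n A i i = int (degree n A i)"
proof -
  have "common_neighbours n A i i = (\<Sum>k<n. \<bar>A i k\<bar>)"
    unfolding common_neighbours_def
  proof (rule sum.cong)
    fix k assume "k \<in> {..<n}"
    then show "\<bar>A i k\<bar> * \<bar>A k i\<bar> = \<bar>A i k\<bar>"
      using assms sym[of k i] entry_cases[of i k] by auto
  qed simp
  then show ?thesis using sum_abs_row[OF assms] by simp
qed

lemma abs_sq_entry_le_common_neighbours: "\<bar>sq_entry n A i j\<bar> \<le> common_neighbours n A i j"
  unfolding sq_entry_def common_neighbours_def
  by (rule order_trans[OF sum_abs]) (simp add: abs_mult)

lemma one_le_common_neighbours: assumes "k < n" "A i k \<noteq> 0" "A k j \<noteq> 0"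
  shows "1 \<le> common_neighbours n A i j"
proof -
  have "\<bar>A i k\<bar> * \<bar>A k j\<bar> \<le> common_neighbours n A i j"
    unfolding common_neighbours_def
    by (rule member_le_sum[where f = "\<lambda>k. \<bar>A i k\<bar> * \<bar>A k j\<bar>"]) (use assms(1) in auto)
  moreover have "1 \<le> \<bar>A i k\<bar>" "1 \<le> \<bar>A k j\<bar>"
    using assms(2,3) by auto
  then have "1 * 1 \<le> \<bar>A i k\<bar> * \<bar>A k j\<bar>"
    by (intro mult_mono) auto
  ultimately show ?thesis by simp
qed

lemma common_neighbours_le_degree: assumes "i < n" "j < n"
  shows "common_neighbours n A i j \<le> int (degree n A j) - \<bar>A i j\<bar>"
proof -
  have "common_neighbours n A i j \<le> (\<Sum>k<n. \<bar>A k j\<bar> - (if k = i then \<bar>A k j\<bar> else 0))"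
    unfolding common_neighbours_def
  proof (rule sum_mono)
    fix k assume "k \<in> {..<n}"
    then show "\<bar>A i k\<bar> * \<bar>A k j\<bar> \<le> \<bar>A k j\<bar> - (if k = i then \<bar>A k j\<bar> else 0)"
      using entry_cases[OF assms(1)] diag_zero[OF assms(1)] by (cases "k = i") force+
  qed
  also have "\<dots> = (\<Sum>k<n. \<bar>A j k\<bar>) - \<bar>A i j\<bar>"
    using assms sym by (simp add: sum_subtractf)
  finally show ?thesis
    using sum_abs_row[OF assms(2)] by simp
qed

lemma degree_le_common_neighbours: assumes "i < n" "j < n" "i \<noteq> j" "A i j = 0"
  shows "int (degree n A i) + int (degree n A j) + 2 - int n \<le> common_neighbours n A i j"
proof -
  have "(\<Sum>k<n. \<bar>A i k\<bar> + \<bar>A j k\<bar> - 1 + (if k = i then 1 else 0) + (if k = j then 1 else 0))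
    \<le> common_neighbours n A i j"
    unfolding common_neighbours_def
  proof (rule sum_mono)
    fix k assume "k \<in> {..<n}"
    then have k: "k < n" by simp
    show "\<bar>A i k\<bar> + \<bar>A j k\<bar> - 1 + (if k = i then 1 else 0) + (if k = j then 1 else 0)
      \<le> \<bar>A i k\<bar> * \<bar>A k j\<bar>"
      using entry_cases[OF assms(1) k] entry_cases[OF k assms(2)] sym[OF k assms(2)]
        diag_zero assms sym[OF assms(1,2)]
      by (cases "k = i"; cases "k = j") auto
  qed
  moreover have "(\<Sum>k<n. \<bar>A i k\<bar> + \<bar>A j k\<bar> - 1 + (if k = i then 1 else 0) + (if k = j then 1 else 0))
    = int (degree n A i) + int (degree n A j) + 2 - int n"
    using assms by (simp add: sum.distrib sum_subtractf sum_abs_row)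
  ultimately show ?thesis by simp
qed

lemma sum_common_neighbours: assumes "i < n"
  shows "(\<Sum>j<n. common_neighbours n A i j) = (\<Sum>k<n. \<bar>A i k\<bar> * int (degree n A k))"
proof -
  have "(\<Sum>j<n. common_neighbours n A i j) = (\<Sum>k<n. \<bar>A i k\<bar> * (\<Sum>j<n. \<bar>A k j\<bar>))"
    unfolding common_neighbours_def by (subst sum.swap) (simp add: sum_distrib_left)
  also have "\<dots> = (\<Sum>k<n. \<bar>A i k\<bar> * int (degree n A k))"
    by (intro sum.cong) (simp_all add: sum_abs_row)
  finally show ?thesis .
qed

text \<open>Termwise, \<open>x y - \<bar>x\<bar> \<bar>y\<bar> + x \<bar>y\<bar> - \<bar>x\<bar> y = (x - \<bar>x\<bar>) (y + \<bar>y\<bar>) \<in> {0, -4}\<close>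
  for \<open>x, y \<in> {-1, 0, 1}\<close>, so the two squares agree modulo 4 once the mixed products
  \<open>A \<bar>A\<bar>\<close> and \<open>\<bar>A\<bar> A\<close> agree.\<close>
lemma four_dvd_sq_entry_minus_common_neighbours:
  assumes "i < n" "j < n"
    and "(\<Sum>k<n. A i k * \<bar>A k j\<bar>) = (\<Sum>k<n. \<bar>A i k\<bar> * A k j)"
  shows "4 dvd (sq_entry n A i j - common_neighbours n A i j)"
proof -
  have "4 dvd (\<Sum>k<n. (A i k - \<bar>A i k\<bar>) * (A k j + \<bar>A k j\<bar>))"
  proof (rule dvd_sum)
    fix k assume "k \<in> {..<n}"
    then have k: "k < n" by simp
    show "4 dvd (A i k - \<bar>A i k\<bar>) * (A k j + \<bar>A k j\<bar>)"
      using entry_cases[OF assms(1) k] entry_cases[OF k assms(2)] by auto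
  qed
  also have "(\<Sum>k<n. (A i k - \<bar>A i k\<bar>) * (A k j + \<bar>A k j\<bar>))
    = sq_entry n A i j - common_neighbours n A i j
      + ((\<Sum>k<n. A i k * \<bar>A k j\<bar>) - (\<Sum>k<n. \<bar>A i k\<bar> * A k j))"
    unfolding sq_entry_def common_neighbours_def by (simp add: algebra_simps sum.distrib sum_subtractf)
  finally show ?thesis
    using assms(3) by simp
qed

lemma common_neighbours_eq_degree_imp_adj:
  assumes "i < n" "j < n" "l < n"
    and "common_neighbours n A i j = int (degree n A i) - \<bar>A i j\<bar>"
    and "A i l \<noteq> 0" "l \<noteq> j"
  shows "A l j \<noteq> 0"
proof -
  let ?f = "\<lambda>k. \<bar>A i k\<bar> * (1 - \<bar>A k j\<bar>)"
  have nonneg: "\<forall>k\<in>{..<n}. 0 \<le> ?f k"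
    using entry_cases[OF _ assms(2)] by fastforce
  have "(\<Sum>k<n. ?f k) = int (degree n A i) - common_neighbours n A i j"
    unfolding common_neighbours_def using sum_abs_row[OF assms(1)]
    by (simp add: algebra_simps sum_subtractf)
  also have "\<dots> = ?f j"
    using assms(2,4) diag_zero by simp
  finally have "(\<Sum>k\<in>{..<n} - {j}. ?f k) = 0"
    using assms(2) by (simp add: sum.remove)
  then have "?f l = 0"
    using nonneg assms(3,6) by (subst (asm) sum_nonneg_eq_0_iff) auto
  then show ?thesis
    using assms(5) entry_cases[OF assms(1,3)] entry_cases[OF assms(3,2)] by auto
qed

end

locale net_regular_srsg =
  fixes n :: nat and A :: "nat \<Rightarrow> nat \<Rightarrow> int" and r :: nat and \<rho> a b c :: int
  assumes srsg: "SRSG n A r a b c"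
    and regular: "regular n A r"
    and net_regular: "net_regular n A \<rho>"

sublocale net_regular_srsg \<subseteq> sgraph
  using srsg by unfold_locales (simp add: SRSG_def)

context net_regular_srsg
begin

lemma n_pos: "0 < n"
  using srsg unfolding SRSG_def edgeless_def by auto

lemma sq_entry_cases: assumes "i < n" "j < n"
  shows "sq_entry n A i j =
    (if j = i then int r else if A i j = 1 then a else if A i j = -1 then b else c)"
  using srsg assms entry_cases[OF assms] unfolding SRSG_def by auto

lemma card_pos_neighbours: "i < n \<Longrightarrow> 2 * int (card (pos_neighbours n A i)) = int r + \<rho>"
  using degree_eq_card_pos_neg[of i] net_degree_eq_card_pos_neg[of i] regular net_regular
  unfolding regular_def net_regular_def by auto

lemma card_neg_neighbours: "i < n \<Longrightarrow> 2 * int (card (neg_neighbours n A i)) = int r - \<rho>"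
  using degree_eq_card_pos_neg[of i] net_degree_eq_card_pos_neg[of i] regular net_regular
  unfolding regular_def net_regular_def by auto

lemma row_sum: "i < n \<Longrightarrow> (\<Sum>k<n. A i k) = \<rho>"
  using sum_row net_regular unfolding net_regular_def by simp

lemma row_equation: assumes i: "i < n"
  shows "int r + int (card (pos_neighbours n A i)) * a + int (card (neg_neighbours n A i)) * b
    + int (card (non_neighbours n A i)) * c = \<rho>\<^sup>2"
proof -
  have "(\<Sum>j<n. sq_entry n A i j) = (\<Sum>k<n. A i k * (\<Sum>j<n. A k j))"
    unfolding sq_entry_def by (subst sum.swap) (simp add: sum_distrib_left)
  also have "\<dots> = (\<Sum>k<n. A i k * \<rho>)"
    by (intro sum.cong) (simp_all add: row_sum)
  also have "\<dots> = \<rho>\<^sup>2"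
    using row_sum[OF i] by (simp add: power2_eq_square flip: sum_distrib_right)
  finally have "(\<Sum>j<n. sq_entry n A i j) = \<rho>\<^sup>2" .
  moreover have "(\<Sum>j<n. sq_entry n A i j) = int r + int (card (pos_neighbours n A i)) * a
    + int (card (neg_neighbours n A i)) * b + int (card (non_neighbours n A i)) * c"
    by (rule row_class_sum) (use i sq_entry_cases in auto)
  ultimately show ?thesis by simp
qed

lemma even_pos_neg_combination: assumes i: "i < n"
  shows "even (int (card (pos_neighbours n A i)) * a - int (card (neg_neighbours n A i)) * b)"
proof -
  have "A i j * sq_entry n A i j =
    (if j = i then 0 else if A i j = 1 then a else if A i j = -1 then - b else 0)" if "j < n" for j
    using sq_entry_cases[OF i that] diag_zero[OF i] entry_cases[OF i that] by auto
  then have "(\<Sum>j<n. A i j * sq_entry n A i j) = 0 + int (card (pos_neighbours n A i)) * a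
    + int (card (neg_neighbours n A i)) * (- b) + int (card (non_neighbours n A i)) * 0"
    by (rule row_class_sum[OF i])
  then show ?thesis
    using even_sum_row_times_sq_entry[OF i] by simp
qed

text \<open>Doubling \<open>A\<^sup>2 = c J + (r - c) I + ((a - b)/2) A + ((a + b - 2c)/2) \<bar>A\<bar>\<close> removes the
  fractions; multiplying by \<open>A\<close> on the left and using \<open>A J = \<rho> J\<close> isolates \<open>A \<bar>A\<bar>\<close>.\<close>
lemma scaled_mixed_product: assumes "i < n" "j < n"
  shows "(a + b - 2 * c) * (\<Sum>k<n. A i k * \<bar>A k j\<bar>)
    = 2 * (\<Sum>k<n. A i k * sq_entry n A k j) - 2 * c * \<rho> - (2 * int r - 2 * c) * A i j
      - (a - b) * sq_entry n A i j"
proof -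
  have "2 * (\<Sum>k<n. A i k * sq_entry n A k j) = (\<Sum>k<n. A i k * (2 * sq_entry n A k j))"
    by (simp add: sum_distrib_left mult.left_commute)
  also have "\<dots> = (\<Sum>k<n. 2 * c * A i k
    + (if k = j then (2 * int r - 2 * c) * A i j else 0) + (a - b) * (A i k * A k j)
    + (a + b - 2 * c) * (A i k * \<bar>A k j\<bar>))"
  proof (rule sum.cong)
    fix k assume "k \<in> {..<n}"
    then have k: "k < n" by simp
    have e: "2 * sq_entry n A k j = 2 * c + (if k = j then 2 * int r - 2 * c else 0)
      + (a - b) * A k j + (a + b - 2 * c) * \<bar>A k j\<bar>"
      using sq_entry_cases[OF k assms(2)] entry_cases[OF k assms(2)] diag_zero[OF k] by auto
    show "A i k * (2 * sq_entry n A k j) = 2 * c * A i k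
      + (if k = j then (2 * int r - 2 * c) * A i j else 0) + (a - b) * (A i k * A k j)
      + (a + b - 2 * c) * (A i k * \<bar>A k j\<bar>)"
      unfolding e by (cases "k = j") (simp_all add: algebra_simps)
  qed simp
  also have "\<dots> = 2 * c * (\<Sum>k<n. A i k) + (2 * int r - 2 * c) * A i j
    + (a - b) * (\<Sum>k<n. A i k * A k j) + (a + b - 2 * c) * (\<Sum>k<n. A i k * \<bar>A k j\<bar>)"
    using assms(2) by (simp add: sum.distrib sum_distrib_left)
  also have "\<dots> = 2 * c * \<rho> + (2 * int r - 2 * c) * A i j + (a - b) * sq_entry n A i j
    + (a + b - 2 * c) * (\<Sum>k<n. A i k * \<bar>A k j\<bar>)"
    using row_sum[OF assms(1)] by (simp add: sq_entry_def)
  finally show ?thesis by simp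
qed

lemma mixed_products_commute: assumes "i < n" "j < n" and "a + b \<noteq> 2 * c"
  shows "(\<Sum>k<n. A i k * \<bar>A k j\<bar>) = (\<Sum>k<n. \<bar>A i k\<bar> * A k j)"
proof -
  have "(\<Sum>k<n. \<bar>A i k\<bar> * A k j) = (\<Sum>k<n. A j k * \<bar>A k i\<bar>)"
    using assms sym by (intro sum.cong) auto
  moreover have "(a + b - 2 * c) * (\<Sum>k<n. A i k * \<bar>A k j\<bar>)
    = (a + b - 2 * c) * (\<Sum>k<n. A j k * \<bar>A k i\<bar>)"
    unfolding scaled_mixed_product[OF assms(1,2)] scaled_mixed_product[OF assms(2,1)]
    using cube_entry_commute[OF assms(1,2)] sq_entry_commute[OF assms(1,2)] sym[OF assms(1,2)]
    by simp
  ultimately show ?thesis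
    using assms(3) by simp
qed

lemma sum_common_neighbours_regular: "i < n \<Longrightarrow> (\<Sum>j<n. common_neighbours n A i j) = int r * int r"
  using sum_common_neighbours sum_abs_row regular unfolding regular_def
  by (simp flip: sum_distrib_right)

lemma independent_triple_bound: assumes "i < n" "j < n" "l < n" "i \<noteq> j" "i \<noteq> l" "j \<noteq> l"
    and "A i j = 0" "A i l = 0" "A j l = 0"
  shows "0 \<le> 3 * int r + 6 * c"
  using gram_nonneg[OF assms(1-3)] sq_entry_cases assms by simp

end

lemma admissible_non_neighbour_count:
  fixes c m z :: int
  assumes zc: "z * c \<in> {-6, -4, -2}" and "1 \<le> z"
    and "4 dvd (c - m)" and "\<bar>c\<bar> \<le> m" and "m \<le> 5" and "6 - z \<le> m"
  shows "(z, c, m) \<in> {(2, -3, 5), (6, -1, 3), (4, -1, 3)}"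
proof -
  have "z * c < 0"
    using zc by auto
  then have "c \<le> -1"
    using \<open>1 \<le> z\<close> by (simp add: mult_less_0_iff)
  then have "z * 1 \<le> z * - c"
    using \<open>1 \<le> z\<close> by (intro mult_left_mono) auto
  then have "z \<in> {1..6}"
    using zc \<open>1 \<le> z\<close> by auto
  then have "z = 1 \<or> z = 2 \<or> z = 3 \<or> z = 4 \<or> z = 5 \<or> z = 6"
    by auto
  moreover have "c = -1 \<or> c = -2 \<or> c = -3 \<or> c = -4 \<or> c = -5"
    using assms \<open>c \<le> -1\<close> by auto
  moreover have "m = 0 \<or> m = 1 \<or> m = 2 \<or> m = 3 \<or> m = 4 \<or> m = 5"
    using assms by auto
  ultimately show ?thesis
    using assms by (elim disjE) simp_all
qed

locale srsg_5_1 = net_regular_srsg n A 5 1 a b c for n A a b c +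
  assumes not_midpoint: "a + b \<noteq> 2 * c"
begin

lemma card_pos_neighbours_5_1: "i < n \<Longrightarrow> card (pos_neighbours n A i) = 3"
  using card_pos_neighbours[of i] by simp

lemma card_neg_neighbours_5_1: "i < n \<Longrightarrow> card (neg_neighbours n A i) = 2"
  using card_neg_neighbours[of i] by simp

lemma card_vertices_eq_5_1: "i < n \<Longrightarrow> int n = 6 + int (card (non_neighbours n A i))"
  using card_vertices_eq[of i] regular unfolding regular_def by simp

lemma row_equation_5_1: "i < n \<Longrightarrow> 3 * a + 2 * b + int (card (non_neighbours n A i)) * c = -4"
  using row_equation[of i] card_pos_neighbours_5_1[of i] card_neg_neighbours_5_1[of i] by simp

lemma even_a: "even a"
proof -
  have "even (3 * a - 2 * b)"
    using even_pos_neg_combination[OF n_pos] card_pos_neighbours_5_1[OF n_pos]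
      card_neg_neighbours_5_1[OF n_pos] by simp
  then show ?thesis by simp
qed

lemma common_neighbours_constraints: assumes "i < n" "j < n"
  shows "4 dvd (sq_entry n A i j - common_neighbours n A i j)"
    and "\<bar>sq_entry n A i j\<bar> \<le> common_neighbours n A i j"
    and "common_neighbours n A i j \<le> 5 - \<bar>A i j\<bar>"
  using four_dvd_sq_entry_minus_common_neighbours[OF assms mixed_products_commute[OF assms not_midpoint]]
    abs_sq_entry_le_common_neighbours common_neighbours_le_degree[OF assms] regular assms
  unfolding regular_def by auto

lemma common_neighbours_range: assumes "i < n" "j < n"
  shows "common_neighbours n A i j \<in> {0, 1, 2, 3, 4, 5}"
proof -
  have "0 \<le> common_neighbours n A i j" "common_neighbours n A i j \<le> 5"
    using common_neighbours_constraints(2,3)[OF assms] by linarith+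
  then show ?thesis by auto
qed

lemma non_neighbour_parameters:
  assumes ab: "(a, b) \<in> {(2, -2), (1, 1), (1, -2), (0, 0), (0, -1), (-1, 0), (-1, -1), (-2, 2)}"
    and ij: "i < n" "j < n" "i \<noteq> j" "A i j = 0"
  shows "(a, b, int n, c, common_neighbours n A i j)
    \<in> {(2, -2, 8, -3, 5), (2, -2, 12, -1, 3), (0, 0, 10, -1, 3)}"
proof -
  define z where "z = int (card (non_neighbours n A i))"
  define m where "m = common_neighbours n A i j"
  have n: "int n = 6 + z"
    using card_vertices_eq_5_1[OF ij(1)] by (simp add: z_def)
  have row: "3 * a + 2 * b + z * c = -4"
    using row_equation_5_1[OF ij(1)] by (simp add: z_def)
  have even_ab: "(a, b) \<in> {(2, -2), (0, 0), (0, -1), (-2, 2)}"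
    using ab even_a by auto
  then have zc: "z * c \<in> {-6, -4, -2}"
    using row by auto
  have "1 \<le> z"
    using ij by (auto simp: z_def non_neighbours_def card_gt_0_iff Suc_le_eq)
  moreover have "sq_entry n A i j = c"
    using sq_entry_cases[OF ij(1,2)] ij(3,4) by simp
  moreover have "int (degree n A i) = 5" "int (degree n A j) = 5"
    using regular ij unfolding regular_def by auto
  ultimately have "4 dvd (c - m)" "\<bar>c\<bar> \<le> m" "m \<le> 5" "6 - z \<le> m"
    using common_neighbours_constraints[OF ij(1,2)] degree_le_common_neighbours[OF ij] n ij(4)
    by (simp_all add: m_def)
  with zc \<open>1 \<le> z\<close> have "(z, c, m) \<in> {(2, -3, 5), (6, -1, 3), (4, -1, 3)}"
    by (rule admissible_non_neighbour_count)
  then show ?thesis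
    using row even_ab n by (auto simp: m_def)
qed

lemma common_neighbours_count_equation:
  assumes i: "i < n"
    and nbr: "\<And>j. j < n \<Longrightarrow> A i j \<noteq> 0 \<Longrightarrow> common_neighbours n A i j = x"
    and non_nbr: "\<And>j. j < n \<Longrightarrow> j \<noteq> i \<Longrightarrow> A i j = 0 \<Longrightarrow> common_neighbours n A i j = y"
  shows "20 = 5 * x + int (card (non_neighbours n A i)) * y"
proof -
  have "common_neighbours n A i j =
    (if j = i then 5 else if A i j = 1 then x else if A i j = -1 then x else y)" if "j < n" for j
    using nbr[OF that] non_nbr[OF that] entry_cases[OF i that] common_neighbours_diag[OF i]
      regular i
    unfolding regular_def by auto
  then have "(\<Sum>j<n. common_neighbours n A i j)
    = 5 + 3 * x + 2 * x + int (card (non_neighbours n A i)) * y"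
    using row_class_sum[OF i] card_pos_neighbours_5_1[OF i] card_neg_neighbours_5_1[OF i] by simp
  then show ?thesis
    using sum_common_neighbours_regular[OF i] by simp
qed

text \<open>Five common neighbours make \<open>N(j) \<subseteq> N(i)\<close>, so a second non-neighbour of \<open>i\<close>
  is not adjacent to \<open>j\<close> either, and the three vertices are pairwise non-adjacent.\<close>
lemma minus_two_le_c:
  assumes ij: "i < n" "j < n" "i \<noteq> j" "A i j = 0"
    and full: "common_neighbours n A i j = 5" and "8 \<le> n"
  shows "-2 \<le> c"
proof -
  have "2 \<le> card (non_neighbours n A i)"
    using card_vertices_eq_5_1[OF ij(1)] \<open>8 \<le> n\<close> by simp
  then have "\<not> non_neighbours n A i \<subseteq> {j}"
    using card_mono[of "{j}" "non_neighbours n A i"] by auto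
  then obtain l where l: "l < n" "l \<noteq> i" "A i l = 0" "l \<noteq> j"
    by (auto simp: non_neighbours_def)
  have "A j l = 0"
  proof (rule ccontr)
    assume "A j l \<noteq> 0"
    have "common_neighbours n A j i = int (degree n A j) - \<bar>A j i\<bar>"
      using full common_neighbours_commute[OF ij(1,2)] sym[OF ij(1,2)] ij regular
      unfolding regular_def by simp
    then have "A l i \<noteq> 0"
      using common_neighbours_eq_degree_imp_adj[OF ij(2,1) l(1)] \<open>A j l \<noteq> 0\<close> l(2) by blast
    then show False
      using sym[OF ij(1) l(1)] l(3) by simp
  qed
  then have "0 \<le> 3 * 5 + 6 * c"
    using independent_triple_bound[OF ij(1,2) l(1) ij(3)] ij(4) l by auto
  then show ?thesis by simp
qed

lemma not_parameters_2_minus2_minus1: "\<not> (a = 2 \<and> b = -2 \<and> c = -1)"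
proof
  assume abc: "a = 2 \<and> b = -2 \<and> c = -1"
  have "common_neighbours n A 0 j = 2" if "j < n" "A 0 j \<noteq> 0" for j
  proof -
    have "j \<noteq> 0"
      using diag_zero[OF n_pos] that(2) by metis
    then show ?thesis
      using common_neighbours_constraints[OF n_pos that(1)] common_neighbours_range[OF n_pos that(1)]
        sq_entry_cases[OF n_pos that(1)] entry_cases[OF n_pos that(1)] that abc
      by auto
  qed
  moreover have "common_neighbours n A 0 j = 3" if "j < n" "j \<noteq> 0" "A 0 j = 0" for j
    using common_neighbours_constraints[OF n_pos that(1)] common_neighbours_range[OF n_pos that(1)]
      sq_entry_cases[OF n_pos that(1)] that abc
    by auto
  ultimately have "20 = 5 * 2 + int (card (non_neighbours n A 0)) * 3"
    by (rule common_neighbours_count_equation[OF n_pos])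
  then show False by presburger
qed

text \<open>A neighbour \<open>j\<close> of \<open>i\<close> with 4 common neighbours is adjacent to the other four
  neighbours of \<open>i\<close>, so it forces every neighbour of \<open>i\<close> to have a common neighbour with \<open>i\<close>.\<close>
lemma not_parameters_0_0_minus1: assumes "7 \<le> n" shows "\<not> (a = 0 \<and> b = 0 \<and> c = -1)"
proof
  assume abc: "a = 0 \<and> b = 0 \<and> c = -1"
  have nbr: "common_neighbours n A 0 j \<in> {0, 4}" if "j < n" "A 0 j \<noteq> 0" for j
  proof -
    have "j \<noteq> 0"
      using diag_zero[OF n_pos] that(2) by metis
    then show ?thesis
      using common_neighbours_constraints[OF n_pos that(1)] common_neighbours_range[OF n_pos that(1)]
        sq_entry_cases[OF n_pos that(1)] entry_cases[OF n_pos that(1)] that abc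
      by auto
  qed
  have non_nbr: "common_neighbours n A 0 j = 3" if "j < n" "j \<noteq> 0" "A 0 j = 0" for j
    using common_neighbours_constraints[OF n_pos that(1)] common_neighbours_range[OF n_pos that(1)]
      sq_entry_cases[OF n_pos that(1)] that abc
    by auto
  have z: "1 \<le> int (card (non_neighbours n A 0))"
    using card_vertices_eq_5_1[OF n_pos] \<open>7 \<le> n\<close> by simp
  show False
  proof (cases "\<exists>j1<n. A 0 j1 \<noteq> 0 \<and> common_neighbours n A 0 j1 = 4")
    case True
    then obtain j1 where j1: "j1 < n" "A 0 j1 \<noteq> 0" "common_neighbours n A 0 j1 = 4"
      by blast
    have j1_full: "common_neighbours n A 0 j1 = int (degree n A 0) - \<bar>A 0 j1\<bar>"
      using j1 entry_cases[OF n_pos j1(1)] regular n_pos unfolding regular_def by auto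
    have "common_neighbours n A 0 l = 4" if "l < n" "A 0 l \<noteq> 0" for l
    proof (cases "l = j1")
      case False
      then have "A l j1 \<noteq> 0"
        using common_neighbours_eq_degree_imp_adj[OF n_pos j1(1) that(1) j1_full that(2)] by blast
      then have "1 \<le> common_neighbours n A 0 l"
        using one_le_common_neighbours[OF j1(1,2)] sym[OF that(1) j1(1)] by simp
      then show ?thesis
        using nbr[OF that] by auto
    qed (use j1 in simp)
    then have "20 = 5 * 4 + int (card (non_neighbours n A 0)) * 3"
      using non_nbr by (rule common_neighbours_count_equation[OF n_pos])
    then show False
      using z by simp
  next
    case False
    then have "common_neighbours n A 0 l = 0" if "l < n" "A 0 l \<noteq> 0" for l
      using nbr[OF that] that by auto
    then have "20 = 5 * 0 + int (card (non_neighbours n A 0)) * 3"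
      using non_nbr by (rule common_neighbours_count_equation[OF n_pos])
    then show False by presburger
  qed
qed

end

lemma not_midpoint_if_class:
  assumes "class_C1 n A a b c \<or> class_C4 n A a b c \<or> class_C5 n A a b c" and "\<not> complete_sg n A"
  shows "a + b \<noteq> 2 * c"
proof
  assume mid: "a + b = 2 * c"
  then have "(of_int a + of_int b) / (2 :: rat) = of_int c"
    by (metis of_int_add of_int_mult of_int_numeral nonzero_mult_div_cancel_left zero_neq_numeral)
  then show False
    using assms mid unfolding class_C1_def class_C4_def class_C5_def by auto
qed

theorem mainTheorem13:
  shows "\<not> (\<exists>n A a b c.
     SRSG n A 5 a b c \<and> connected_sg n A \<and> \<not> complete_sg n A \<and>
     regular n A 5 \<and> net_regular n A 1 \<and>
     (class_C1 n A a b c \<or> class_C4 n A a b c \<or> class_C5 n A a b c) \<and>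
     (a, b) \<in> {(2, -2), (1, 1), (1, -2), (0, 0), (0, -1), (-1, 0), (-1, -1), (-2, 2)})"
proof (intro notI, elim exE conjE)
  fix n A a b c
  assume srsg: "SRSG n A 5 a b c" and "connected_sg n A" and incomplete: "\<not> complete_sg n A"
    and "regular n A 5" and "net_regular n A 1"
    and cls: "class_C1 n A a b c \<or> class_C4 n A a b c \<or> class_C5 n A a b c"
    and ab: "(a, b) \<in> {(2, -2), (1, 1), (1, -2), (0, 0), (0, -1), (-1, 0), (-1, -1), (-2, 2)}"
  interpret srsg_5_1 n A a b c
    using srsg \<open>regular n A 5\<close> \<open>net_regular n A 1\<close> not_midpoint_if_class[OF cls incomplete]
    by unfold_locales auto
  obtain i j where ij: "i < n" "j < n" "i \<noteq> j" "A i j = 0"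
    using incomplete unfolding complete_sg_def by blast
  show False
    using non_neighbour_parameters[OF ab ij] minus_two_le_c[OF ij]
      not_parameters_2_minus2_minus1 not_parameters_0_0_minus1
    by auto
qed

end
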